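(* Fix $N\ge1$ and an environment of order $N$ with mean matrix $\mathbf{M}=(M(i,j))_{i,j=1}^N$, $M(i,j)=j\,p_{ij}$, and macro mean matrix $\mathbf{M}_{macro}=(M_{macro}(i,j))$, $M_{macro}(i,j)=i\,p_{ij}=\frac{i}{j}M(i,j)$. Let $\rho$ be the Perron root of $\mathbf{M}$ and $\mathbf{u}=(u_1,\dots,u_N)$ the right eigenvector of $\mathbf{M}$ corresponding to $\rho$ with $u_1+\dots+u_N=1$. Then $\rho$ is the maximal in modulus eigenvalue of $\mathbf{M}_{macro}$, and the vector $\mathbf{U}=(U_1,\dots,U_N)$ with $$U_j=\frac{j\,u_j}{\sum_{k=1}^N k\,u_k},\quad j=1,\dots,N,$$ is a right eigenvector of $\mathbf{M}_{macro}$ corresponding to $\rho$.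
   Context: An environment of order $N$ is a tuple $\{P(i;\cdot),\ i=1,\dots,N\}$ where $P(i;\cdot)$ is a probability measure on $\{0,1,\dots,N\}^i$ invariant under permutations of coordinates; $p_{ij}=\sum_{k_2,\dots,k_i}P(i;(j,k_2,\dots,k_i))$ is the probability that a given member of a sibling group of size $i$ has exactly $j$ children. $\mathbf{M}$ is the mean matrix of the individual offspring laws (entries $j p_{ij}$), and $\mathbf{M}_{macro}$ is the mean matrix of the macro process whose $(i,j)$ entry is the expected number of size-$j$ sibling groups produced by one size-$i$ sibling group. The Perron root is the maximal-modulus eigenvalue of the nonnegative matrix $\mathbf{M}$. *)

theory Defs
  imports "HOL-Probability.Probability_Mass_Function" "HOL-Combinatorics.Permutations"
    "Jordan_Normal_Form.Char_Poly"
begin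

text \<open>An environment of order N: for each sibling-group size i in 1..N a probability
  measure P i on sequences of length i with entries in 0..N (the children counts of the
  i siblings), invariant under permutations of coordinates.\<close>
definition environment :: "nat \<Rightarrow> (nat \<Rightarrow> nat list pmf) \<Rightarrow> bool" where
  "environment N P \<longleftrightarrow>
     (\<forall>i\<in>{1..N}. set_pmf (P i) \<subseteq> {xs. length xs = i \<and> set xs \<subseteq> {0..N}} \<and>
        (\<forall>\<sigma>. \<sigma> permutes {..<i} \<longrightarrow> map_pmf (permute_list \<sigma>) (P i) = P i))"

text \<open>p_ij: probability that a given (the first) member of a sibling group of size i
  has exactly j children.\<close>
definition p_env :: "(nat \<Rightarrow> nat list pmf) \<Rightarrow> nat \<Rightarrow> nat \<Rightarrow> real" where
  "p_env P i j = measure_pmf.prob (P i) {xs. xs ! 0 = j}"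

text \<open>Matrices are 0-indexed in Jordan_Normal_Form: entry (i,j) stands for the paper's (i+1,j+1).\<close>
definition mean_matrix :: "nat \<Rightarrow> (nat \<Rightarrow> nat list pmf) \<Rightarrow> real mat" where
  "mean_matrix N P = mat N N (\<lambda>(i,j). real (j+1) * p_env P (i+1) (j+1))"

definition macro_mean_matrix :: "nat \<Rightarrow> (nat \<Rightarrow> nat list pmf) \<Rightarrow> real mat" where
  "macro_mean_matrix N P = mat N N (\<lambda>(i,j). real (i+1) * p_env P (i+1) (j+1))"

definition max_modulus_eigenvalue :: "real mat \<Rightarrow> real \<Rightarrow> bool" where
  "max_modulus_eigenvalue A \<rho> \<longleftrightarrow>
     eigenvalue (map_mat complex_of_real A) (complex_of_real \<rho>) \<and>
     (\<forall>z. eigenvalue (map_mat complex_of_real A) z \<longrightarrow> cmod z \<le> \<rho>)"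

end

theory Submission
  imports Defs
begin

text \<open>Since \<open>M_macro(i,j) = (i/j) M(i,j)\<close>, the macro mean matrix is the diagonal
  similarity \<open>D M D\<^sup>-\<^sup>1\<close> of the mean matrix with \<open>D = diag(1,\<dots>,N)\<close>. Hence both matrices have
  the same (complex) eigenvalues, in particular the same Perron root, and \<open>D u\<close> is an
  eigenvector of \<open>M_macro\<close> for \<open>\<rho>\<close>; normalising it gives \<open>U\<close>.\<close>

lemma eigenvector_diagonal_similar:
  fixes A B :: "'a::field mat"
  assumes A: "A \<in> carrier_mat n n" and B: "B \<in> carrier_mat n n"
    and B_entries: "\<And>i j. i < n \<Longrightarrow> j < n \<Longrightarrow> B $$ (i,j) = d i / d j * A $$ (i,j)"
    and d_nonzero: "\<And>i. i < n \<Longrightarrow> d i \<noteq> 0"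
    and ev: "eigenvector A v k"
  shows "eigenvector B (vec n (\<lambda>i. d i * v $ i)) k"
proof -
  let ?w = "vec n (\<lambda>i. d i * v $ i)"
  from ev A have v: "v \<in> carrier_vec n" "v \<noteq> 0\<^sub>v n" and Av: "A *\<^sub>v v = k \<cdot>\<^sub>v v"
    by (auto simp: eigenvector_def)
  obtain i where i: "i < n" "v $ i \<noteq> 0"
    using v by (metis carrier_vecD eq_vecI index_zero_vec)
  have "?w $ i \<noteq> 0"
    using i d_nonzero by simp
  hence w_nonzero: "?w \<noteq> 0\<^sub>v n"
    using i(1) by (metis index_zero_vec(1))
  have "B *\<^sub>v ?w = k \<cdot>\<^sub>v ?w"
  proof (rule eq_vecI)
    fix i assume "i < dim_vec (k \<cdot>\<^sub>v ?w)"
    hence i: "i < n" by simp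
    have "(B *\<^sub>v ?w) $ i = (\<Sum>j<n. B $$ (i,j) * (d j * v $ j))"
      using B i by (simp add: mult_mat_vec_def scalar_prod_def atLeast0LessThan)
    also have "\<dots> = (\<Sum>j<n. d i * (A $$ (i,j) * v $ j))"
      by (rule sum.cong) (auto simp: B_entries i d_nonzero)
    also have "\<dots> = d i * (A *\<^sub>v v) $ i"
      using A v i by (simp add: mult_mat_vec_def scalar_prod_def atLeast0LessThan sum_distrib_left)
    also have "\<dots> = (k \<cdot>\<^sub>v ?w) $ i"
      using Av i v by simp
    finally show "(B *\<^sub>v ?w) $ i = (k \<cdot>\<^sub>v ?w) $ i" .
  qed (use B in simp)
  thus ?thesis
    using w_nonzero B by (simp add: eigenvector_def)
qed

lemma eigenvalue_diagonal_similar_iff: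
  fixes A B :: "'a::field mat"
  assumes A: "A \<in> carrier_mat n n" and B: "B \<in> carrier_mat n n"
    and B_entries: "\<And>i j. i < n \<Longrightarrow> j < n \<Longrightarrow> B $$ (i,j) = d i / d j * A $$ (i,j)"
    and d_nonzero: "\<And>i. i < n \<Longrightarrow> d i \<noteq> 0"
  shows "eigenvalue B k \<longleftrightarrow> eigenvalue A k"
proof
  assume "eigenvalue B k"
  then obtain v where "eigenvector B v k"
    by (auto simp: eigenvalue_def)
  from eigenvector_diagonal_similar[OF B A _ _ this, of "\<lambda>i. inverse (d i)"]
  show "eigenvalue A k"
    using B_entries d_nonzero by (auto simp: eigenvalue_def field_simps)
next
  assume "eigenvalue A k"
  then obtain v where "eigenvector A v k"
    by (auto simp: eigenvalue_def)
  from eigenvector_diagonal_similar[OF A B B_entries d_nonzero this]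
  show "eigenvalue B k"
    by (auto simp: eigenvalue_def)
qed

lemma macro_mean_matrix_entry:
  assumes "i < N" "j < N"
  shows "macro_mean_matrix N P $$ (i,j) = real (i+1) / real (j+1) * mean_matrix N P $$ (i,j)"
  using assms by (simp add: mean_matrix_def macro_mean_matrix_def)

lemma mean_matrices_carrier:
  "mean_matrix N P \<in> carrier_mat N N" "macro_mean_matrix N P \<in> carrier_mat N N"
  by (auto simp: mean_matrix_def macro_mean_matrix_def)

lemma macro_mean_matrix_eigenvalue_iff:
  "eigenvalue (map_mat complex_of_real (macro_mean_matrix N P)) z \<longleftrightarrow>
   eigenvalue (map_mat complex_of_real (mean_matrix N P)) z"
proof (rule eigenvalue_diagonal_similar_iff[where d = "\<lambda>i. of_nat (i+1)"])
  fix i j assume "i < N" "j < N"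
  thus "map_mat complex_of_real (macro_mean_matrix N P) $$ (i,j) =
        of_nat (i+1) / of_nat (j+1) * map_mat complex_of_real (mean_matrix N P) $$ (i,j)"
    using mean_matrices_carrier[of N P] by (simp add: macro_mean_matrix_entry)
qed (use mean_matrices_carrier[of N P] in \<open>simp_all del: of_nat_Suc\<close>)

theorem lemma2:
  fixes N :: nat and P :: "nat \<Rightarrow> nat list pmf" and \<rho> :: real and u :: "real vec"
  assumes "N \<ge> 1"
    and "environment N P"
    and "max_modulus_eigenvalue (mean_matrix N P) \<rho>"
    and "eigenvector (mean_matrix N P) u \<rho>"
    and "\<forall>j<N. u $ j \<ge> 0"
    and "(\<Sum>j<N. u $ j) = 1"
  shows "max_modulus_eigenvalue (macro_mean_matrix N P) \<rho> \<and>
         eigenvector (macro_mean_matrix N P)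
           (vec N (\<lambda>j. real (j+1) * u $ j / (\<Sum>k<N. real (k+1) * u $ k))) \<rho>"
proof -
  define s where "s = (\<Sum>k<N. real (k+1) * u $ k)"
  have "(\<Sum>j<N. u $ j) \<le> s"
    unfolding s_def by (rule sum_mono) (use assms(5) in \<open>auto simp: mult_le_cancel_right1\<close>)
  hence "s > 0"
    using assms(6) by simp
  hence "eigenvector (macro_mean_matrix N P) (vec N (\<lambda>j. real (j+1) / s * u $ j)) \<rho>"
    by (intro eigenvector_diagonal_similar[OF mean_matrices_carrier _ _ assms(4)])
      (simp_all add: macro_mean_matrix_entry)
  moreover have "max_modulus_eigenvalue (macro_mean_matrix N P) \<rho>"
    using assms(3) by (simp add: max_modulus_eigenvalue_def macro_mean_matrix_eigenvalue_iff)
  ultimately show ?thesis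
    unfolding s_def by (simp add: ac_simps)
qed

end
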